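(* In the $\{0,1\}$-speed setting, let $\mathcal B=\{B_1,\dots,B_m\}$ be a partition of $n$ jobs with processing times $\mathbf p$ into $m$ bags, and let $\mathcal B^*=\{B^*_1,\dots,B^*_m\}$ be an optimal partition of the jobs when all $m$ machines are available (i.e. a partition into $m$ bags with $\max_{B'\in\mathcal B^*}p(B')=opt(\mathbf p,m)$). If $\frac{\max_{B\in\mathcal B}p(B)}{\max_{B'\in\mathcal B^*}p(B')}\le\theta$, then $\mathcal B$ is a $\max\{\theta,2\}$-robust partition.
   Context: $\{0,1\}$-speed setting: there are $n$ jobs with processing times $p_1,\dots,p_n\ge0$ and $m$ machines, each of speed $0$ (unavailable) or $1$ (available); for a bag $B$, $p(B)=\sum_{j\in B}p_j$. $opt(\mathbf p,x)$ denotes the minimum makespan (maximum machine load) of scheduling the individual jobs on $x$ identical unit-speed machines. A partition of the jobs into $m$ bags is $\gamma$-robust if for every number $m_0\in\{1,\dots,m\}$ of available machines, the bags can be assigned (each as a whole) to $m_0$ identical unit-speed machines with makespan at most $\gamma\cdot opt(\mathbf p,m_0)$. *)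

theory Defs
  imports Complex_Main
begin

text \<open>Jobs are 0..<n with processing times p j. An assignment of jobs to x
  machines (or bags) is a function f with f j < x for all jobs j < n.\<close>

definition load :: "(nat \<Rightarrow> real) \<Rightarrow> nat \<Rightarrow> (nat \<Rightarrow> nat) \<Rightarrow> nat \<Rightarrow> real" where
  "load p n f i = (\<Sum>j\<in>{j. j < n \<and> f j = i}. p j)"

definition makespan :: "(nat \<Rightarrow> real) \<Rightarrow> nat \<Rightarrow> nat \<Rightarrow> (nat \<Rightarrow> nat) \<Rightarrow> real" where
  "makespan p n x f = Max {load p n f i | i. i < x}"

definition assignment :: "nat \<Rightarrow> nat \<Rightarrow> (nat \<Rightarrow> nat) \<Rightarrow> bool" where
  "assignment n x f \<longleftrightarrow> (\<forall>j<n. f j < x)"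

definition opt :: "(nat \<Rightarrow> real) \<Rightarrow> nat \<Rightarrow> nat \<Rightarrow> real" where
  "opt p n x = Min {makespan p n x f | f. assignment n x f}"

text \<open>A partition of the jobs into m bags (job j goes to bag B j < m) is gamma-robust if
  for every m0 in 1..m the bags can be assigned as a whole to m0 machines with
  makespan at most gamma * opt(p, m0).\<close>
definition robust :: "(nat \<Rightarrow> real) \<Rightarrow> nat \<Rightarrow> nat \<Rightarrow> (nat \<Rightarrow> nat) \<Rightarrow> real \<Rightarrow> bool" where
  "robust p n m B \<gamma> \<longleftrightarrow>
     (\<forall>m0\<in>{1..m}. \<exists>g. assignment m m0 g \<and>
        (\<forall>i<m0. (\<Sum>k\<in>{k. k < m \<and> g k = i}. load p n B k) \<le> \<gamma> * opt p n m0))"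

end

theory Submission
  imports Defs "HOL-Library.FuncSet"
begin

text \<open>For \<open>m\<^sub>0\<close> available machines, place the bags according to a local optimum of the
  sum of squared machine loads. A machine whose load \<open>L\<close> exceeds every bag holds two bags,
  hence one of size at most \<open>L/2\<close>; moving it elsewhere must not decrease the potential, so
  every machine carries at least \<open>L/2\<close> and \<open>L \<le> 2P/m\<^sub>0 \<le> 2 opt(p,m\<^sub>0)\<close>, where \<open>P\<close> is the
  total processing time. Otherwise \<open>L\<close> is at most the largest bag, which is at most
  \<open>\<theta> opt(p,m) \<le> \<theta> opt(p,m\<^sub>0)\<close>.\<close>

lemma load_nonneg: "\<forall>j<n. 0 \<le> p j \<Longrightarrow> 0 \<le> load p n f i"
  unfolding load_def by (auto intro: sum_nonneg)

lemma load_le_sum: "\<forall>j<n. 0 \<le> p j \<Longrightarrow> load p n f i \<le> (\<Sum>j<n. p j)"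
  unfolding load_def by (intro sum_mono2) auto

lemma sum_load:
  assumes "assignment n x f"
  shows "(\<Sum>i<x. load p n f i) = (\<Sum>j<n. p j)"
proof -
  have "(\<Sum>i<x. sum p {j \<in> {..<n}. f j = i}) = sum p {..<n}"
    by (rule sum.group) (use assms in \<open>auto simp: assignment_def\<close>)
  moreover have "\<And>i. {j \<in> {..<n}. f j = i} = {j. j < n \<and> f j = i}" by auto
  ultimately show ?thesis unfolding load_def by simp
qed

lemma load_restrict: "load p n (restrict f {..<n}) = load p n f"
proof
  fix i
  have "{j. j < n \<and> restrict f {..<n} j = i} = {j. j < n \<and> f j = i}" by auto
  then show "load p n (restrict f {..<n}) i = load p n f i" unfolding load_def by simp
qed

lemma load_fun_upd_source:
  assumes "c < m" "g c = i" "j \<noteq> i"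
  shows "load s m (g(c := j)) i = load s m g i - s c"
proof -
  have "{k. k < m \<and> (g(c := j)) k = i} = {k. k < m \<and> g k = i} - {c}" using assms by auto
  then show ?thesis unfolding load_def using assms by (simp add: sum_diff1)
qed

lemma load_fun_upd_target:
  assumes "c < m" "g c = i" "j \<noteq> i"
  shows "load s m (g(c := j)) j = load s m g j + s c"
proof -
  have "{k. k < m \<and> (g(c := j)) k = j} = insert c {k. k < m \<and> g k = j}" using assms by auto
  then show ?thesis unfolding load_def using assms by simp
qed

lemma load_fun_upd_other:
  assumes "g c = i" "k \<noteq> i" "k \<noteq> j"
  shows "load s m (g(c := j)) k = load s m g k"
proof -
  have "{l. l < m \<and> (g(c := j)) l = k} = {l. l < m \<and> g l = k}" using assms by auto
  then show ?thesis unfolding load_def by simp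
qed

lemma load_le_makespan: "i < x \<Longrightarrow> load p n f i \<le> makespan p n x f"
  unfolding makespan_def by (intro Max_ge) auto

lemma makespan_attained:
  assumes "1 \<le> x"
  obtains i where "i < x" "makespan p n x f = load p n f i"
proof -
  have "{load p n f i | i. i < x} = load p n f ` {..<x}" by auto
  moreover have "Max (load p n f ` {..<x}) \<in> load p n f ` {..<x}"
    using assms by (intro Max_in) (auto simp: lessThan_empty_iff)
  ultimately show ?thesis using that unfolding makespan_def by auto
qed

lemma makespan_nonneg: "\<forall>j<n. 0 \<le> p j \<Longrightarrow> 1 \<le> x \<Longrightarrow> 0 \<le> makespan p n x f"
  by (metis makespan_attained load_nonneg)

lemma makespan_le_sum: "\<forall>j<n. 0 \<le> p j \<Longrightarrow> 1 \<le> x \<Longrightarrow> makespan p n x f \<le> (\<Sum>j<n. p j)"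
  by (metis makespan_attained load_le_sum)

lemma sum_le_makespan:
  assumes "assignment n x f"
  shows "(\<Sum>j<n. p j) \<le> x * makespan p n x f"
proof -
  have "(\<Sum>j<n. p j) = (\<Sum>i<x. load p n f i)" using sum_load[OF assms] by simp
  also have "\<dots> \<le> (\<Sum>i<x. makespan p n x f)" by (intro sum_mono) (simp add: load_le_makespan)
  finally show ?thesis by simp
qed

lemma makespan_le_of_ratio_le:
  assumes "\<forall>j<n. 0 \<le> p j" "1 \<le> m" "assignment n m f'"
    and "makespan p n m f / makespan p n m f' \<le> \<theta>"
  shows "makespan p n m f \<le> \<theta> * makespan p n m f'"
proof (cases "makespan p n m f' = 0")
  case True  \<comment> \<open>the quotient is then \<open>0\<close> by convention, and all processing times vanish\<close>
  then have "(\<Sum>j<n. p j) \<le> 0" using sum_le_makespan[OF assms(3), of p] by simp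
  then show ?thesis using makespan_le_sum[OF assms(1,2), of f] True by simp
next
  case False
  then have "0 < makespan p n m f'" using makespan_nonneg[OF assms(1,2)] by (simp add: order_less_le)
  then show ?thesis using assms(4) by (simp add: divide_le_eq mult.commute)
qed

lemma makespans_finite_nonempty:
  assumes "1 \<le> x"
  shows "finite {makespan p n x f | f. assignment n x f}"
    and "{makespan p n x f | f. assignment n x f} \<noteq> {}"
proof -
  have "{makespan p n x f | f. assignment n x f} \<subseteq> makespan p n x ` ({..<n} \<rightarrow>\<^sub>E {..<x})"
  proof
    fix y assume "y \<in> {makespan p n x f | f. assignment n x f}"
    then obtain f where f: "assignment n x f" "y = makespan p n x f" by auto
    then have "y = makespan p n x (restrict f {..<n})"
      unfolding makespan_def by (simp add: load_restrict)
    moreover have "restrict f {..<n} \<in> {..<n} \<rightarrow>\<^sub>E {..<x}" using f(1) unfolding assignment_def by auto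
    ultimately show "y \<in> makespan p n x ` ({..<n} \<rightarrow>\<^sub>E {..<x})" by blast
  qed
  then show "finite {makespan p n x f | f. assignment n x f}"
    by (rule finite_subset) (simp add: finite_PiE)
  have "assignment n x (\<lambda>_. 0)" using assms unfolding assignment_def by auto
  then show "{makespan p n x f | f. assignment n x f} \<noteq> {}" by blast
qed

lemma opt_le_makespan: "1 \<le> x \<Longrightarrow> assignment n x f \<Longrightarrow> opt p n x \<le> makespan p n x f"
  unfolding opt_def using makespans_finite_nonempty by (intro Min_le) auto

lemma opt_attained:
  assumes "1 \<le> x"
  obtains f where "assignment n x f" "opt p n x = makespan p n x f"
proof -
  have "opt p n x \<in> {makespan p n x f | f. assignment n x f}"
    unfolding opt_def using makespans_finite_nonempty[OF assms] by (rule Min_in)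
  then show ?thesis using that by auto
qed

lemma opt_nonneg: "\<forall>j<n. 0 \<le> p j \<Longrightarrow> 1 \<le> x \<Longrightarrow> 0 \<le> opt p n x"
  by (metis opt_attained makespan_nonneg)

lemma average_le_opt:
  assumes "1 \<le> x"
  shows "(\<Sum>j<n. p j) / x \<le> opt p n x"
proof -
  obtain f where "assignment n x f" "opt p n x = makespan p n x f" using opt_attained[OF assms] .
  then show ?thesis using sum_le_makespan[of n x f p] assms by (simp add: divide_le_eq mult.commute)
qed

lemma opt_antimono:
  assumes "\<forall>j<n. 0 \<le> p j" "1 \<le> m\<^sub>0" "m\<^sub>0 \<le> m"
  shows "opt p n m \<le> opt p n m\<^sub>0"
proof -
  obtain f where f: "assignment n m\<^sub>0 f" "opt p n m\<^sub>0 = makespan p n m\<^sub>0 f"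
    using opt_attained[OF assms(2)] .
  have "assignment n m f" using f(1) assms(3) unfolding assignment_def by auto
  moreover obtain i where i: "i < m" "makespan p n m f = load p n f i"
    using makespan_attained[of m p n f] assms(2,3) by auto
  moreover have "load p n f i \<le> makespan p n m\<^sub>0 f"
  proof (cases "i < m\<^sub>0")
    case True
    then show ?thesis by (rule load_le_makespan)
  next
    case False
    then have "{j. j < n \<and> f j = i} = {}" using f(1) unfolding assignment_def by auto
    then have "load p n f i = 0" unfolding load_def by (simp only: sum.empty)
    then show ?thesis using makespan_nonneg[OF assms(1,2)] by simp
  qed
  ultimately show ?thesis using opt_le_makespan[of m n f p] assms f(2) by simp
qed

lemma sum_sq_load_fun_upd:
  assumes "c < m" "g c = i" "j \<noteq> i" "i < x" "j < x"
  shows "(\<Sum>k<x. (load s m (g(c := j)) k)\<^sup>2) - (\<Sum>k<x. (load s m g k)\<^sup>2)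
    = 2 * s c * (load s m g j + s c - load s m g i)"
proof -
  have "(\<Sum>k<x. (load s m (g(c := j)) k)\<^sup>2) - (\<Sum>k<x. (load s m g k)\<^sup>2)
      = (\<Sum>k\<in>{i, j}. (load s m (g(c := j)) k)\<^sup>2 - (load s m g k)\<^sup>2)"
    unfolding sum_subtractf[symmetric] using assms
    by (intro sum.mono_neutral_right) (auto simp: load_fun_upd_other)
  also have "\<dots> = ((load s m g i - s c)\<^sup>2 - (load s m g i)\<^sup>2) + ((load s m g j + s c)\<^sup>2 - (load s m g j)\<^sup>2)"
    using assms by (simp add: load_fun_upd_source load_fun_upd_target)
  also have "\<dots> = 2 * s c * (load s m g j + s c - load s m g i)"
    by (simp add: power2_eq_square algebra_simps)
  finally show ?thesis .
qed

lemma exists_min_sum_sq_load: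
  assumes "1 \<le> x"
  obtains g where "assignment m x g"
    and "\<And>h. assignment m x h \<Longrightarrow> (\<Sum>k<x. (load s m g k)\<^sup>2) \<le> (\<Sum>k<x. (load s m h k)\<^sup>2)"
proof -
  define \<Phi> where "\<Phi> h = (\<Sum>k<x. (load s m h k)\<^sup>2)" for h
  define A where "A = {..<m} \<rightarrow>\<^sub>E {..<x}"
  have "finite (\<Phi> ` A)" unfolding A_def by (simp add: finite_PiE)
  moreover have "restrict (\<lambda>_. 0) {..<m} \<in> A" using assms unfolding A_def by auto
  ultimately have "Min (\<Phi> ` A) \<in> \<Phi> ` A" by (intro Min_in) auto
  then obtain g where g: "g \<in> A" "\<Phi> g = Min (\<Phi> ` A)" by auto
  have "\<Phi> g \<le> \<Phi> h" if "assignment m x h" for h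
  proof -
    have "restrict h {..<m} \<in> A" using that unfolding A_def assignment_def by auto
    then have "\<Phi> g \<le> \<Phi> (restrict h {..<m})" using g \<open>finite (\<Phi> ` A)\<close> by simp
    then show ?thesis unfolding \<Phi>_def by (simp add: load_restrict)
  qed
  moreover have "assignment m x g" using g(1) unfolding A_def assignment_def by auto
  ultimately show ?thesis using that unfolding \<Phi>_def by blast
qed

lemma load_le_at_min_sum_sq_load:
  assumes g: "assignment m x g"
    and min: "\<And>h. assignment m x h \<Longrightarrow> (\<Sum>k<x. (load s m g k)\<^sup>2) \<le> (\<Sum>k<x. (load s m h k)\<^sup>2)"
    and c: "c < m" "0 < s c" and j: "j < x"
  shows "load s m g (g c) \<le> load s m g j + s c"
proof (cases "j = g c")
  case False
  have "assignment m x (g(c := j))" using g j unfolding assignment_def by auto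
  then have "0 \<le> (\<Sum>k<x. (load s m (g(c := j)) k)\<^sup>2) - (\<Sum>k<x. (load s m g k)\<^sup>2)"
    using min by simp
  also have "\<dots> = 2 * s c * (load s m g j + s c - load s m g (g c))"
    using g c j False unfolding assignment_def by (intro sum_sq_load_fun_upd) auto
  finally show ?thesis using c(2) by (simp add: zero_le_mult_iff)
qed (use c in simp)

lemma exists_small_item:
  assumes "\<forall>k<m. 0 \<le> s k" "\<forall>k<m. s k \<le> S" "0 \<le> S" "S < load s m g i"
  obtains c where "c < m" "g c = i" "0 < s c" "s c \<le> load s m g i / 2"
proof -
  define K where "K = {k. k < m \<and> g k = i \<and> 0 < s k}"
  have finK: "finite K" unfolding K_def by simp
  have LK: "load s m g i = sum s K" unfolding load_def K_def using assms(1)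
    by (intro sum.mono_neutral_right) auto
  have "\<exists>a\<in>K. \<exists>b\<in>K. a \<noteq> b"
  proof (rule ccontr)
    assume singleton: "\<not> ?thesis"
    show False
    proof (cases "K = {}")
      case True
      then show False using LK assms(3,4) by simp
    next
      case False
      then obtain a where "a \<in> K" by blast
      with singleton have "K = {a}" by blast
      then show False using LK assms(2,4) unfolding K_def by auto
    qed
  qed
  then obtain a b where ab: "a \<in> K" "b \<in> K" "a \<noteq> b" by blast
  have "s a + s b = sum s {a, b}" using ab(3) by simp
  also have "\<dots> \<le> load s m g i"
    unfolding LK using ab finK by (intro sum_mono2) (auto simp: K_def)
  finally have "s a + s b \<le> load s m g i" .
  then show ?thesis using that ab unfolding K_def by (cases "s a \<le> s b") auto
qed

lemma exists_assignment_load_le_max: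
  fixes s :: "nat \<Rightarrow> real"
  assumes nonneg: "\<forall>k<m. 0 \<le> s k" and le_S: "\<forall>k<m. s k \<le> S" "0 \<le> S" and x: "1 \<le> x"
  obtains g where "assignment m x g" "\<forall>i<x. load s m g i \<le> max S (2 * (\<Sum>k<m. s k) / x)"
proof -
  obtain g where g: "assignment m x g"
    and g_min: "\<And>h. assignment m x h \<Longrightarrow> (\<Sum>k<x. (load s m g k)\<^sup>2) \<le> (\<Sum>k<x. (load s m h k)\<^sup>2)"
    using exists_min_sum_sq_load[OF x] by metis
  have "load s m g i \<le> max S (2 * (\<Sum>k<m. s k) / x)" if i: "i < x" for i
  proof (rule ccontr)
    assume too_large: "\<not> ?thesis"
    then have "S < load s m g i" by simp
    then obtain c where c: "c < m" "g c = i" "0 < s c" "s c \<le> load s m g i / 2"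
      using exists_small_item[OF nonneg le_S] by blast
    have "load s m g i / 2 \<le> load s m g j" if "j < x" for j
      using load_le_at_min_sum_sq_load[OF g g_min c(1,3) that] c by simp
    then have "(\<Sum>j<x. load s m g i / 2) \<le> (\<Sum>j<x. load s m g j)" by (intro sum_mono) simp
    then have "x * load s m g i \<le> 2 * (\<Sum>k<m. s k)" using sum_load[OF g] by simp
    then have "load s m g i \<le> 2 * (\<Sum>k<m. s k) / x" using x by (simp add: le_divide_eq mult.commute)
    then show False using too_large by simp
  qed
  then show ?thesis using that g by blast
qed

theorem lemma16:
  fixes p :: "nat \<Rightarrow> real" and n m :: nat and B Bstar :: "nat \<Rightarrow> nat" and \<theta> :: real
  assumes "\<forall>j<n. p j \<ge> 0"
    and "m \<ge> 1"
    and "assignment n m B"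
    and "assignment n m Bstar"
    and "makespan p n m Bstar = opt p n m"
    and "makespan p n m B / makespan p n m Bstar \<le> \<theta>"
  shows "robust p n m B (max \<theta> 2)"
  unfolding robust_def
proof
  fix m\<^sub>0 assume "m\<^sub>0 \<in> {1..m}"
  then have m\<^sub>0: "1 \<le> m\<^sub>0" "m\<^sub>0 \<le> m" by auto
  let ?S = "makespan p n m B" and ?\<gamma> = "max \<theta> 2"
  have opt_m\<^sub>0: "0 \<le> opt p n m\<^sub>0" using opt_nonneg assms(1) m\<^sub>0(1) .
  have "?S \<le> \<theta> * opt p n m" using makespan_le_of_ratio_le[OF assms(1,2,4,6)] assms(5) by simp
  also have "\<dots> \<le> ?\<gamma> * opt p n m" using opt_nonneg assms(1,2) by (intro mult_right_mono) auto
  also have "\<dots> \<le> ?\<gamma> * opt p n m\<^sub>0" using opt_antimono[OF assms(1) m\<^sub>0] by (simp add: mult_left_mono)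
  finally have S_le: "?S \<le> ?\<gamma> * opt p n m\<^sub>0" .
  have "2 * (\<Sum>k<m. load p n B k) / m\<^sub>0 \<le> 2 * opt p n m\<^sub>0"
    using average_le_opt[OF m\<^sub>0(1), where p=p and n=n] sum_load[OF assms(3)] by simp
  also have "\<dots> \<le> ?\<gamma> * opt p n m\<^sub>0" using opt_m\<^sub>0 by (intro mult_right_mono) auto
  finally have avg_le: "2 * (\<Sum>k<m. load p n B k) / m\<^sub>0 \<le> ?\<gamma> * opt p n m\<^sub>0" .
  obtain g where "assignment m m\<^sub>0 g"
    "\<forall>i<m\<^sub>0. load (load p n B) m g i \<le> max ?S (2 * (\<Sum>k<m. load p n B k) / m\<^sub>0)"
    using exists_assignment_load_le_max[of m "load p n B" ?S m\<^sub>0] load_nonneg[OF assms(1)] load_le_makespan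
      makespan_nonneg[OF assms(1,2)] m\<^sub>0(1) by blast
  then show "\<exists>g. assignment m m\<^sub>0 g \<and>
      (\<forall>i<m\<^sub>0. (\<Sum>k\<in>{k. k < m \<and> g k = i}. load p n B k) \<le> ?\<gamma> * opt p n m\<^sub>0)"
    using S_le avg_le unfolding load_def[of "load p n B"] by force
qed

end
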